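(* Let $\delta>2\epsilon>0$, $u=\frac1{\sqrt2}(-1,1)^\top$, $v=\frac1{\sqrt2}(1,1)^\top$, and let $Z_1,Z_2$ be i.i.d. Bernoulli$(1/2)$. Define $g_1=\frac\delta2u+\epsilon(2Z_1-1)v$, $g_2=\frac\delta2u+\epsilon(2Z_2-1)v$, $g_3=-\delta u$ in $\mathbb R^2$, all three clients honest. Then $\mathbb E\mu=\frac13(\mathbb Eg_1+\mathbb Eg_2+\mathbb Eg_3)=0$, $\mathbb E\|g_i-\mathbb Eg_i\|_2^2\le\epsilon^2$ and $\|\mathbb Eg_i-\mathbb E\mu\|_2\le\delta$ for $i=1,2,3$, and: (a) if $\hat\mu$ is the coordinate-wise median of $g_1,g_2,g_3$, then $\mathbb E\|\hat\mu-\mathbb E\mu\|_2^2>\frac{\delta^2}8+\frac{\epsilon^2}2$; (b) if $\hat\mu$ is the geometric median $\arg\min_x\sum_{i=1}^3\|x-g_i\|_2$, then $\mathbb E\|\hat\mu-\mathbb E\mu\|_2^2>\frac{\delta^2}8+\frac{\epsilon^2}2$; (c) if $\hat\mu$ is the Krum output, i.e. a $g_i$ minimizing $\min_{j\ne i}\|g_i-g_j\|_2^2$ (ties broken arbitrarily), then $\|\hat\mu-\mathbb E\mu\|_2^2=\epsilon^2+\frac{\delta^2}4$ always.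
   Context: This example has no Byzantine clients; it shows that these aggregation rules have gradient estimation error of order $\epsilon^2+\delta^2$ even without attack. *)

theory Defs
  imports "HOL-Probability.Probability"
begin

definition uvec :: "real^2" where
  "uvec = (\<chi> i. if i = 1 then - 1 / sqrt 2 else 1 / sqrt 2)"

definition vvec :: "real^2" where
  "vvec = (\<chi> i. if i = 1 then 1 / sqrt 2 else 1 / sqrt 2)"

text \<open>Law of (Z1, Z2): two independent Bernoulli(1/2) variables (True = 1).\<close>
definition Zpmf :: "(bool \<times> bool) pmf" where
  "Zpmf = pair_pmf (bernoulli_pmf (1/2)) (bernoulli_pmf (1/2))"

definition grad :: "real \<Rightarrow> real \<Rightarrow> nat \<Rightarrow> bool \<times> bool \<Rightarrow> real^2" where
  "grad \<delta> \<epsilon> i z =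
     (if i = 1 then (\<delta> / 2) *\<^sub>R uvec + (\<epsilon> * (2 * of_bool (fst z) - 1)) *\<^sub>R vvec
      else if i = 2 then (\<delta> / 2) *\<^sub>R uvec + (\<epsilon> * (2 * of_bool (snd z) - 1)) *\<^sub>R vvec
      else - (\<delta> *\<^sub>R uvec))"

definition med3 :: "real \<Rightarrow> real \<Rightarrow> real \<Rightarrow> real" where
  "med3 a b c = max (min a b) (min (max a b) c)"

definition cw_median3 :: "real^2 \<Rightarrow> real^2 \<Rightarrow> real^2 \<Rightarrow> real^2" where
  "cw_median3 x y z = (\<chi> i. med3 (x $ i) (y $ i) (z $ i))"

definition is_geom_median :: "(nat \<Rightarrow> real^2) \<Rightarrow> real^2 \<Rightarrow> bool" where
  "is_geom_median g x \<longleftrightarrow>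
     (\<forall>y. (\<Sum>i\<in>{1,2,3}. norm (x - g i)) \<le> (\<Sum>i\<in>{1,2,3}. norm (y - g i)))"

definition krum_score :: "(nat \<Rightarrow> real^2) \<Rightarrow> nat \<Rightarrow> real" where
  "krum_score g i = Min ((\<lambda>j. (norm (g i - g j))\<^sup>2) ` ({1,2,3} - {i}))"

definition is_krum_choice :: "(nat \<Rightarrow> real^2) \<Rightarrow> nat \<Rightarrow> bool" where
  "is_krum_choice g i \<longleftrightarrow> i \<in> {1,2,3} \<and> (\<forall>j\<in>{1,2,3}. krum_score g i \<le> krum_score g j)"

end

theory Submission
  imports Defs
begin

text \<open>
  In the orthonormal frame (u, v) the clients sit at (\<delta>/2, \<plusminus>\<epsilon>), (\<delta>/2, \<plusminus>\<epsilon>) and (-\<delta>, 0),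
  so the true mean is 0. When Z1 = Z2 the first two clients coincide; then both
  medians and Krum return that point, at squared distance \<delta>^2/4 + \<epsilon>^2 from 0. When
  Z1 \<noteq> Z2 the coordinate-wise median is (\<delta>/2 - \<epsilon>, 0) and the geometric median is
  still not 0, so averaging over the four equally likely outcomes exceeds
  \<delta>^2/8 + \<epsilon>^2/2. Krum never selects the outlier -\<delta>u, because the other two clients
  are at distance at most 2\<epsilon> < \<delta> from each other, while the outlier is at distance at
  least 3\<delta>/2 from both.
\<close>

definition uv_point :: "real \<Rightarrow> real \<Rightarrow> real^2" where
  "uv_point a b = a *\<^sub>R uvec + b *\<^sub>R vvec"

lemma uv_point_nth:
  "uv_point a b $ 1 = (b - a) / sqrt 2"
  "uv_point a b $ 2 = (a + b) / sqrt 2"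
  by (simp_all add: uv_point_def uvec_def vvec_def field_simps)

lemma norm_uv_point_sq: "(norm (uv_point a b))\<^sup>2 = a\<^sup>2 + b\<^sup>2"
proof -
  have "(norm (uv_point a b))\<^sup>2 = ((b - a) / sqrt 2)\<^sup>2 + ((a + b) / sqrt 2)\<^sup>2"
    unfolding power2_norm_eq_inner inner_vec_def sum_2 uv_point_nth
    by (simp add: power2_eq_square)
  also have "\<dots> = a\<^sup>2 + b\<^sup>2"
    by (simp add: power_divide power2_eq_square field_simps)
  finally show ?thesis .
qed

lemma norm_uv_point: "norm (uv_point a b) = sqrt (a\<^sup>2 + b\<^sup>2)"
  by (metis norm_uv_point_sq norm_ge_zero real_sqrt_unique)

lemma uv_point_diff: "uv_point a b - uv_point c d = uv_point (a - c) (b - d)"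
  and uv_point_add: "uv_point a b + uv_point c d = uv_point (a + c) (b + d)"
  and scaleR_uv_point: "r *\<^sub>R uv_point a b = uv_point (r * a) (r * b)"
  and uv_point_zero: "uv_point 0 0 = 0"
  by (simp_all add: uv_point_def algebra_simps)

definition rademacher :: "bool \<Rightarrow> real" where
  "rademacher b = 2 * of_bool b - 1"

lemma rademacher_sq [simp]: "(rademacher b)\<^sup>2 = 1"
  by (cases b) (simp_all add: rademacher_def)

lemma grad_uv_point:
  "grad \<delta> \<epsilon> 1 z = uv_point (\<delta>/2) (\<epsilon> * rademacher (fst z))"
  "grad \<delta> \<epsilon> 2 z = uv_point (\<delta>/2) (\<epsilon> * rademacher (snd z))"
  "grad \<delta> \<epsilon> 3 z = uv_point (-\<delta>) 0"
  by (simp_all add: grad_def uv_point_def rademacher_def)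

lemma expectation_Zpmf:
  fixes f :: "bool \<times> bool \<Rightarrow> 'b::{banach, second_countable_topology}"
  shows "measure_pmf.expectation Zpmf f =
    (1/4) *\<^sub>R (f (True, True) + f (True, False) + f (False, True) + f (False, False))"
proof -
  have "measure_pmf.expectation Zpmf f = (\<Sum>a\<in>UNIV. pmf Zpmf a *\<^sub>R f a)"
    by (rule integral_measure_pmf) auto
  also have "UNIV = {(True, True), (True, False), (False, True), (False, False)}"
    by auto
  finally show ?thesis
    by (simp add: Zpmf_def pmf_pair scaleR_add_right)
qed

lemma expectation_grad:
  "measure_pmf.expectation Zpmf (grad \<delta> \<epsilon> 1) = uv_point (\<delta>/2) 0"
  "measure_pmf.expectation Zpmf (grad \<delta> \<epsilon> 2) = uv_point (\<delta>/2) 0"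
  "measure_pmf.expectation Zpmf (grad \<delta> \<epsilon> 3) = uv_point (-\<delta>) 0"
  by (simp_all only: expectation_Zpmf grad_uv_point uv_point_add scaleR_uv_point fst_conv snd_conv)
     (simp_all add: rademacher_def)

lemma mean_expectation_grad_eq_0:
  "(1/3) *\<^sub>R (measure_pmf.expectation Zpmf (grad \<delta> \<epsilon> 1)
     + measure_pmf.expectation Zpmf (grad \<delta> \<epsilon> 2) + measure_pmf.expectation Zpmf (grad \<delta> \<epsilon> 3)) = 0"
  unfolding expectation_grad uv_point_add scaleR_uv_point by (simp add: uv_point_zero)

lemma variance_grad_le:
  assumes "i \<in> {1, 2, 3}"
  shows "measure_pmf.expectation Zpmf
    (\<lambda>z. (norm (grad \<delta> \<epsilon> i z - measure_pmf.expectation Zpmf (grad \<delta> \<epsilon> i)))\<^sup>2) \<le> \<epsilon>\<^sup>2"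
  using assms
  by (auto simp only: grad_uv_point expectation_grad uv_point_diff norm_uv_point_sq
      insert_iff empty_iff) (simp_all add: power_mult_distrib)

lemma bias_grad_le:
  assumes "0 \<le> \<delta>" and "i \<in> {1, 2, 3}"
  shows "norm (measure_pmf.expectation Zpmf (grad \<delta> \<epsilon> i)) \<le> \<delta>"
  using assms
  by (auto simp only: expectation_grad norm_uv_point insert_iff empty_iff) simp_all

lemma med3_divide: "med3 (x / c) (y / c) (z / c) = med3 x y z / c" if "c > 0"
  using that unfolding med3_def
  by (simp add: max_divide_distrib_right min_divide_distrib_right)

lemma cw_median3_grad:
  assumes "0 < \<epsilon>" and "2 * \<epsilon> < \<delta>"
  shows "cw_median3 (grad \<delta> \<epsilon> 1 z) (grad \<delta> \<epsilon> 2 z) (grad \<delta> \<epsilon> 3 z) =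
    (if fst z = snd z then uv_point (\<delta>/2) (\<epsilon> * rademacher (fst z)) else uv_point (\<delta>/2 - \<epsilon>) 0)"
proof -
  have "sqrt 2 > 0" by simp
  with assms show ?thesis
    unfolding cw_median3_def grad_uv_point
    by (simp only: vec_eq_iff forall_2 vec_lambda_beta uv_point_nth med3_divide)
       (cases "fst z"; cases "snd z"; simp add: uv_point_nth rademacher_def med3_def max_def min_def)
qed

lemma cw_median3_risk:
  assumes "0 < \<epsilon>" and "2 * \<epsilon> < \<delta>"
  shows "measure_pmf.expectation Zpmf
      (\<lambda>z. (norm (cw_median3 (grad \<delta> \<epsilon> 1 z) (grad \<delta> \<epsilon> 2 z) (grad \<delta> \<epsilon> 3 z)))\<^sup>2)
    = \<delta>\<^sup>2 / 8 + \<epsilon>\<^sup>2 / 2 + (\<delta>/2 - \<epsilon>)\<^sup>2 / 2"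
  unfolding expectation_Zpmf cw_median3_grad[OF assms]
  by (simp add: norm_uv_point_sq power_mult_distrib power_divide)

lemma is_geom_median_le:
  assumes "is_geom_median g x"
  shows "norm (x - g 1) + norm (x - g 2) + norm (x - g 3) \<le> norm (y - g 1) + norm (y - g 2) + norm (y - g 3)"
  using assms unfolding is_geom_median_def by (simp add: add.assoc)

lemma is_geom_median_double_point:
  assumes "is_geom_median g x" and "g 1 = g 2"
  shows "x = g 1"
proof -
  have "norm (x - g 1) + norm (x - g 2) + norm (x - g 3) \<le> norm (g 1 - g 1) + norm (g 1 - g 2) + norm (g 1 - g 3)"
    using is_geom_median_le[OF assms(1)] .
  moreover have "norm (g 1 - g 3) \<le> norm (x - g 3) + norm (x - g 1)"
    using norm_triangle_ineq4[of "x - g 3" "x - g 1"] by simp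
  moreover have "norm (g 1 - g 1) = 0"
    by simp
  ultimately have "norm (x - g 1) \<le> 0"
    unfolding assms(2) by linarith
  then show ?thesis by simp
qed

lemma is_geom_median_nonzero:
  assumes "0 < \<epsilon>" and "2 * \<epsilon> < \<delta>" and "a\<^sup>2 = \<epsilon>\<^sup>2"
    and g: "g 1 = uv_point (\<delta>/2) a" "g 2 = uv_point (\<delta>/2) (-a)" "g 3 = uv_point (-\<delta>) 0"
    and "is_geom_median g x"
  shows "x \<noteq> 0"
proof
  assume "x = 0"
  \<comment> \<open>Sliding 0 along u towards the pair g 1, g 2 lowers the total distance; the
      comparison reduces to (\<delta> - 3\<epsilon>/2)(\<delta> - 5\<epsilon>/6) > 0.\<close>
  define y where "y = uv_point (\<delta>/2 - 3*\<epsilon>/4) 0"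
  have sum_x: "norm (x - g 1) + norm (x - g 2) + norm (x - g 3) = 2 * sqrt (\<delta>\<^sup>2/4 + \<epsilon>\<^sup>2) + \<delta>"
    using \<open>x = 0\<close> assms(1,2,3) unfolding g
    by (simp add: uv_point_zero[symmetric] uv_point_diff norm_uv_point power_divide)
  have "norm (y - g 1) = sqrt ((5*\<epsilon>/4)\<^sup>2)" "norm (y - g 2) = sqrt ((5*\<epsilon>/4)\<^sup>2)"
    using assms(3) unfolding g by (simp_all add: y_def uv_point_diff norm_uv_point power2_eq_square)
  moreover have "norm (y - g 3) = sqrt ((3*\<delta>/2 - 3*\<epsilon>/4)\<^sup>2)"
    unfolding g by (simp add: y_def uv_point_diff norm_uv_point algebra_simps)
  ultimately have sum_y: "norm (y - g 1) + norm (y - g 2) + norm (y - g 3) = 3*\<delta>/2 + 7*\<epsilon>/4"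
    using assms(1,2) by simp
  have "(\<delta>/2 + 7*\<epsilon>/4)\<^sup>2 < (2 * sqrt (\<delta>\<^sup>2/4 + \<epsilon>\<^sup>2))\<^sup>2"
  proof -
    have "0 < (\<delta> - 3*\<epsilon>/2) * (\<delta> - 5*\<epsilon>/6)"
      using assms(1,2) by (intro mult_pos_pos) auto
    then show ?thesis
      by (simp add: power_mult_distrib power2_eq_square field_simps)
  qed
  then have "\<delta>/2 + 7*\<epsilon>/4 < 2 * sqrt (\<delta>\<^sup>2/4 + \<epsilon>\<^sup>2)"
    by (rule power2_less_imp_less) simp
  with is_geom_median_le[OF assms(7), of y] sum_x sum_y show False
    by linarith
qed

lemma geom_median_risk_gt:
  assumes "0 < \<epsilon>" and "2 * \<epsilon> < \<delta>"
    and gm: "\<And>z. is_geom_median (\<lambda>i. grad \<delta> \<epsilon> i z) (gm z)"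
  shows "measure_pmf.expectation Zpmf (\<lambda>z. (norm (gm z))\<^sup>2) > \<delta>\<^sup>2 / 8 + \<epsilon>\<^sup>2 / 2"
proof -
  have agree: "(norm (gm (b, b)))\<^sup>2 = \<delta>\<^sup>2/4 + \<epsilon>\<^sup>2" for b
  proof -
    have "gm (b, b) = grad \<delta> \<epsilon> 1 (b, b)"
      using is_geom_median_double_point[OF gm] by (simp add: grad_def)
    then show ?thesis
      unfolding grad_uv_point by (simp add: norm_uv_point_sq power_mult_distrib power_divide)
  qed
  have "gm (True, False) \<noteq> 0"
    by (rule is_geom_median_nonzero[OF assms(1,2), of \<epsilon>, OF _ _ _ _ gm])
      (simp_all only: grad_uv_point, simp_all add: rademacher_def)
  moreover have "gm (False, True) \<noteq> 0"
    by (rule is_geom_median_nonzero[OF assms(1,2), of "-\<epsilon>", OF _ _ _ _ gm])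
      (simp_all only: grad_uv_point, simp_all add: rademacher_def)
  ultimately show ?thesis
    unfolding expectation_Zpmf agree by (simp add: add_pos_pos)
qed

lemma krum_score_eq:
  "krum_score g 1 = min ((norm (g 1 - g 2))\<^sup>2) ((norm (g 1 - g 3))\<^sup>2)"
  "krum_score g 3 = min ((norm (g 3 - g 1))\<^sup>2) ((norm (g 3 - g 2))\<^sup>2)"
proof -
  have "{1, 2, 3} - {1::nat} = {2, 3}" "{1, 2, 3} - {3::nat} = {1, 2}"
    by auto
  then show "krum_score g 1 = min ((norm (g 1 - g 2))\<^sup>2) ((norm (g 1 - g 3))\<^sup>2)"
    "krum_score g 3 = min ((norm (g 3 - g 1))\<^sup>2) ((norm (g 3 - g 2))\<^sup>2)"
    unfolding krum_score_def by simp_all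
qed

lemma is_krum_choice_not_outlier:
  assumes "norm (g 1 - g 2) < norm (g 3 - g 1)" and "norm (g 1 - g 2) < norm (g 3 - g 2)"
    and "is_krum_choice g k"
  shows "k \<in> {1, 2}"
proof -
  have "krum_score g 1 < krum_score g 3"
    using assms(1,2) unfolding krum_score_eq
    by (simp add: min_less_iff_disj power_strict_mono)
  with assms(3) show ?thesis
    unfolding is_krum_choice_def by force
qed

lemma krum_error:
  assumes "0 < \<epsilon>" and "2 * \<epsilon> < \<delta>"
    and "is_krum_choice (\<lambda>i. grad \<delta> \<epsilon> i z) k"
  shows "(norm (grad \<delta> \<epsilon> k z))\<^sup>2 = \<epsilon>\<^sup>2 + \<delta>\<^sup>2 / 4"
proof -
  have "\<bar>\<epsilon> * rademacher a - \<epsilon> * rademacher b\<bar> < 3 * \<delta> / 2" for a b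
    using assms(1,2) by (cases a; cases b) (simp_all add: rademacher_def)
  then have close: "norm (grad \<delta> \<epsilon> 1 z - grad \<delta> \<epsilon> 2 z) < 3 * \<delta> / 2"
    unfolding grad_uv_point by (simp add: uv_point_diff norm_uv_point)
  have "3 * \<delta> / 2 \<le> norm (grad \<delta> \<epsilon> 3 z - grad \<delta> \<epsilon> i z)" if i: "i \<in> {1, 2}" for i
  proof -
    obtain b where "grad \<delta> \<epsilon> i z = uv_point (\<delta>/2) (\<epsilon> * rademacher b)"
      using i grad_uv_point(1,2) by blast
    then have "norm (grad \<delta> \<epsilon> 3 z - grad \<delta> \<epsilon> i z) = sqrt ((3 * \<delta> / 2)\<^sup>2 + (\<epsilon> * rademacher b)\<^sup>2)"
      unfolding grad_uv_point(3) by (simp add: uv_point_diff norm_uv_point power2_eq_square)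
    moreover have "sqrt ((3 * \<delta> / 2)\<^sup>2) \<le> sqrt ((3 * \<delta> / 2)\<^sup>2 + (\<epsilon> * rademacher b)\<^sup>2)"
      by (rule real_sqrt_le_mono) simp
    moreover have "sqrt ((3 * \<delta> / 2)\<^sup>2) = 3 * \<delta> / 2"
      using assms(1,2) by simp
    ultimately show ?thesis
      by linarith
  qed
  with close have "k \<in> {1, 2}"
    by (intro is_krum_choice_not_outlier[OF _ _ assms(3)]) fastforce+
  then show ?thesis
    by (auto simp only: insert_iff empty_iff grad_uv_point)
      (simp_all add: norm_uv_point_sq power_mult_distrib power_divide)
qed

theorem mainTheorem13:
  fixes \<delta> \<epsilon> :: real
  assumes "\<epsilon> > 0" and "\<delta> > 2 * \<epsilon>"
  defines "E \<equiv> \<lambda>i. measure_pmf.expectation Zpmf (grad \<delta> \<epsilon> i)"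
  defines "Emu \<equiv> (1/3) *\<^sub>R (E 1 + E 2 + E 3)"
  shows "Emu = 0
    \<and> (\<forall>i\<in>{1,2,3}. measure_pmf.expectation Zpmf (\<lambda>z. (norm (grad \<delta> \<epsilon> i z - E i))\<^sup>2) \<le> \<epsilon>\<^sup>2)
    \<and> (\<forall>i\<in>{1,2,3}. norm (E i - Emu) \<le> \<delta>)
    \<and> measure_pmf.expectation Zpmf
        (\<lambda>z. (norm (cw_median3 (grad \<delta> \<epsilon> 1 z) (grad \<delta> \<epsilon> 2 z) (grad \<delta> \<epsilon> 3 z) - Emu))\<^sup>2)
        > \<delta>\<^sup>2 / 8 + \<epsilon>\<^sup>2 / 2
    \<and> (\<forall>gm. (\<forall>z. is_geom_median (\<lambda>i. grad \<delta> \<epsilon> i z) (gm z)) \<longrightarrow>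
         measure_pmf.expectation Zpmf (\<lambda>z. (norm (gm z - Emu))\<^sup>2) > \<delta>\<^sup>2 / 8 + \<epsilon>\<^sup>2 / 2)
    \<and> (\<forall>z k. is_krum_choice (\<lambda>i. grad \<delta> \<epsilon> i z) k \<longrightarrow>
         (norm (grad \<delta> \<epsilon> k z - Emu))\<^sup>2 = \<epsilon>\<^sup>2 + \<delta>\<^sup>2 / 4)"
proof -
  have Emu: "Emu = 0"
    unfolding Emu_def E_def by (rule mean_expectation_grad_eq_0)
  have "\<delta>\<^sup>2 / 8 + \<epsilon>\<^sup>2 / 2 < measure_pmf.expectation Zpmf
      (\<lambda>z. (norm (cw_median3 (grad \<delta> \<epsilon> 1 z) (grad \<delta> \<epsilon> 2 z) (grad \<delta> \<epsilon> 3 z)))\<^sup>2)"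
    using assms(1,2) unfolding cw_median3_risk[OF assms(1,2)] by simp
  then show ?thesis
    using assms(1,2) variance_grad_le bias_grad_le geom_median_risk_gt krum_error
    unfolding Emu E_def by auto
qed

end
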